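(* Let $w$ be a word over a finite alphabet $A$, $H$ a graph on $A$ with loops allowed, and $G=G_{w,H}(u_1,\dots,u_n)$. Suppose $G$ is a strong $(\ell,d)$-graph and its sparsification $\phi(G)$ has a connected component $C$ with $|C|\ge(2d'^2\ell^2|H|^2+1)(m-1)+1$, where $d'=\max\{d,2\}$ and $m$ is a positive integer. Then $V(C)$ contains a set of $m$ consecutive integers.
   Context: For positive integers $u_1<\dots<u_n\le|w|$, $G_{w,H}(u_1,\dots,u_n)$ is the graph on $\{u_1,\dots,u_n\}$ in which $u_iu_j$ is an edge iff ($|u_i-u_j|=1$ and $w_{u_i}w_{u_j}\notin E(H)$) or ($|u_i-u_j|>1$ and $w_{u_i}w_{u_j}\in E(H)$) (for equal letters $a$, a loop at $a$); $|H|$ is the number of vertices of $H$. For $U,W\subseteq V(G)$ let $\Delta(U,W)=\max\{|N(u)\cap W|,|N(x)\cap U|:u\in U,x\in W\}$ and $\overline\Delta(U,W)$ the same with $\overline N(v)=V(G)\setminus(N(v)\cup\{v\})$ in place of $N$. A partition $\pi=\{V_1,\dots,V_{\ell'}\}$ of $V(G)$ is an $(\ell,d)$-partition if $\ell'\le\ell$ and for all not necessarily distinct $i,j$, $(V_i,V_j)$ is $d$-sparse ($\Delta(V_i,V_j)\le d$) or $d$-dense ($\overline\Delta(V_i,V_j)\le d$); it is strong if every bag has at least $5\cdot2^\ell d$ vertices; a strong $(\ell,d)$-graph admits one. Its density graph $H(G,\pi)$ has vertices $1,\dots,\ell'$ and an edge (loop when $i=j$) $ij$ iff $(V_i,V_j)$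 is $d$-dense. For a partition $\pi$ and graph $H'$ with loops on $\{1,\dots,\ell'\}$, $\psi(G,\pi,H')$ is obtained from $G$ by replacing the bipartite graph between $V_i$ and $V_j$ by its bipartite complement for each edge $ij$ of $H'$ with $i\neq j$, and replacing $G[V_i]$ by its complement for each loop at $i$. The sparsification is $\phi(G)=\psi(G,\pi,H(G,\pi))$ for any strong $(\ell,d)$-partition $\pi$ (it does not depend on the choice of $\pi$). *)

theory Defs
  imports Main "HOL-Library.Disjoint_Sets"
begin

text \<open>A graph is given by a vertex set V and an adjacency relation E
(only its restriction to V matters; it is meant to be symmetric and loopless).\<close>

definition nbh :: "'v set \<Rightarrow> ('v \<Rightarrow> 'v \<Rightarrow> bool) \<Rightarrow> 'v \<Rightarrow> 'v set" where
  "nbh V E v = {x \<in> V. E v x}"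

definition nonnbh :: "'v set \<Rightarrow> ('v \<Rightarrow> 'v \<Rightarrow> bool) \<Rightarrow> 'v \<Rightarrow> 'v set" where
  "nonnbh V E v = V - (nbh V E v \<union> {v})"

definition sparse_pair :: "'v set \<Rightarrow> ('v \<Rightarrow> 'v \<Rightarrow> bool) \<Rightarrow> nat \<Rightarrow> 'v set \<Rightarrow> 'v set \<Rightarrow> bool" where
  "sparse_pair V E d U W \<longleftrightarrow>
     (\<forall>u\<in>U. card (nbh V E u \<inter> W) \<le> d) \<and> (\<forall>x\<in>W. card (nbh V E x \<inter> U) \<le> d)"

definition dense_pair :: "'v set \<Rightarrow> ('v \<Rightarrow> 'v \<Rightarrow> bool) \<Rightarrow> nat \<Rightarrow> 'v set \<Rightarrow> 'v set \<Rightarrow> bool" where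
  "dense_pair V E d U W \<longleftrightarrow>
     (\<forall>u\<in>U. card (nonnbh V E u \<inter> W) \<le> d) \<and> (\<forall>x\<in>W. card (nonnbh V E x \<inter> U) \<le> d)"

definition ld_partition :: "'v set \<Rightarrow> ('v \<Rightarrow> 'v \<Rightarrow> bool) \<Rightarrow> nat \<Rightarrow> nat \<Rightarrow> 'v set set \<Rightarrow> bool" where
  "ld_partition V E l d P \<longleftrightarrow> partition_on V P \<and> card P \<le> l \<and>
     (\<forall>X\<in>P. \<forall>Y\<in>P. sparse_pair V E d X Y \<or> dense_pair V E d X Y)"

definition strong_ld_partition :: "'v set \<Rightarrow> ('v \<Rightarrow> 'v \<Rightarrow> bool) \<Rightarrow> nat \<Rightarrow> nat \<Rightarrow> 'v set set \<Rightarrow> bool" where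
  "strong_ld_partition V E l d P \<longleftrightarrow> ld_partition V E l d P \<and>
     (\<forall>X\<in>P. card X \<ge> 5 * 2 ^ l * d)"

definition strong_ld_graph :: "'v set \<Rightarrow> ('v \<Rightarrow> 'v \<Rightarrow> bool) \<Rightarrow> nat \<Rightarrow> nat \<Rightarrow> bool" where
  "strong_ld_graph V E l d \<longleftrightarrow> (\<exists>P. strong_ld_partition V E l d P)"

text \<open>Density graph H(G,pi), with the bags themselves as vertices (X = Y gives a loop).\<close>
definition density_graph :: "'v set \<Rightarrow> ('v \<Rightarrow> 'v \<Rightarrow> bool) \<Rightarrow> nat \<Rightarrow> 'v set set \<Rightarrow> 'v set \<Rightarrow> 'v set \<Rightarrow> bool" where
  "density_graph V E d P X Y \<longleftrightarrow> X \<in> P \<and> Y \<in> P \<and> dense_pair V E d X Y"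

definition psi :: "'v set \<Rightarrow> ('v \<Rightarrow> 'v \<Rightarrow> bool) \<Rightarrow> 'v set set \<Rightarrow> ('v set \<Rightarrow> 'v set \<Rightarrow> bool)
                    \<Rightarrow> 'v \<Rightarrow> 'v \<Rightarrow> bool" where
  "psi V E P H' x y \<longleftrightarrow> x \<in> V \<and> y \<in> V \<and> x \<noteq> y \<and>
     (E x y \<noteq> (\<exists>X\<in>P. \<exists>Y\<in>P. x \<in> X \<and> y \<in> Y \<and> H' X Y))"

definition sparsification :: "'v set \<Rightarrow> ('v \<Rightarrow> 'v \<Rightarrow> bool) \<Rightarrow> nat \<Rightarrow> nat \<Rightarrow> 'v \<Rightarrow> 'v \<Rightarrow> bool" where
  "sparsification V E l d =
     (let P = (SOME P. strong_ld_partition V E l d P) in psi V E P (density_graph V E d P))"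

definition is_component :: "'v set \<Rightarrow> ('v \<Rightarrow> 'v \<Rightarrow> bool) \<Rightarrow> 'v set \<Rightarrow> bool" where
  "is_component V E C \<longleftrightarrow>
     (\<exists>x\<in>V. C = {y. (\<lambda>a b. a \<in> V \<and> b \<in> V \<and> E a b)\<^sup>*\<^sup>* x y})"

text \<open>Adjacency of G_{w,H}: positions are 1-based, letter at position u is w ! (u - 1).\<close>
definition wH_edge :: "'a list \<Rightarrow> ('a \<Rightarrow> 'a \<Rightarrow> bool) \<Rightarrow> nat \<Rightarrow> nat \<Rightarrow> bool" where
  "wH_edge w HE x y \<longleftrightarrow>
     ((x + 1 = y \<or> y + 1 = x) \<and> \<not> HE (w ! (x - 1)) (w ! (y - 1))) \<or>
     ((x + 1 < y \<or> y + 1 < x) \<and> HE (w ! (x - 1)) (w ! (y - 1)))"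

end

theory Submission
  imports Defs
begin

text \<open>In the sparsification every vertex has at most \<open>d\<close> neighbours in each bag. Between
positions at distance at least 2, adjacency depends only on the bags and the letters of the two
endpoints; so if \<open>a\<close> is adjacent to one distant vertex of bag \<open>X\<close> carrying letter \<open>b\<close>, it is
adjacent to all of them except possibly \<open>a - 1\<close>, \<open>a\<close>, \<open>a + 1\<close>. Hence each of the at most
\<open>\<ell>|A|\<close> classes (bag, letter) contains at most \<open>d + 3\<close> endpoints of distant edges. Every vertex
of the component is joined, by an interval of consecutive integers inside the component, to a
fixed root or to such an endpoint; without \<open>m\<close> consecutive integers each of these anchors
accounts for at most \<open>m - 1\<close> vertices.\<close>

lemma partition_on_part_unique:
  assumes "partition_on V P" "X \<in> P" "Y \<in> P" "x \<in> X" "x \<in> Y"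
  shows "X = Y"
  using disjointD[OF partition_onD2[OF assms(1)] assms(2,3)] assms(4,5) by blast

lemma psi_density_graph_iff:
  assumes "partition_on V P" "X \<in> P" "Y \<in> P" "x \<in> X" "y \<in> Y"
  shows "psi V E P (density_graph V E d P) x y \<longleftrightarrow> x \<noteq> y \<and> (E x y \<noteq> dense_pair V E d X Y)"
proof -
  have "x \<in> V" "y \<in> V" using assms partition_onD1 by blast+
  moreover have "(\<exists>X'\<in>P. \<exists>Y'\<in>P. x \<in> X' \<and> y \<in> Y' \<and> density_graph V E d P X' Y')
      \<longleftrightarrow> dense_pair V E d X Y"
    using assms partition_on_part_unique[OF assms(1)] unfolding density_graph_def by metis
  ultimately show ?thesis unfolding psi_def by blast
qed

lemma card_psi_density_graph_le:
  assumes "finite V" "ld_partition V E l d P" "Y \<in> P"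
  shows "card {y\<in>Y. psi V E P (density_graph V E d P) x y} \<le> d"
proof (cases "x \<in> V")
  case False
  then show ?thesis by (simp add: psi_def)
next
  case True
  have part: "partition_on V P"
    and pairs: "\<forall>X\<in>P. \<forall>Y\<in>P. sparse_pair V E d X Y \<or> dense_pair V E d X Y"
    using assms(2) unfolding ld_partition_def by blast+
  obtain X where X: "X \<in> P" "x \<in> X" using True partition_onD1[OF part] by blast
  have YV: "Y \<subseteq> V" using assms(3) partition_onD1[OF part] by blast
  have finY: "finite Y" using assms(1) YV finite_subset by blast
  have psi_iff: "psi V E P (density_graph V E d P) x y \<longleftrightarrow> x \<noteq> y \<and> (E x y \<noteq> dense_pair V E d X Y)"
    if "y \<in> Y" for y
    using psi_density_graph_iff[OF part X(1) assms(3) X(2) that] .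
  show ?thesis
  proof (cases "dense_pair V E d X Y")
    case True
    have "{y\<in>Y. psi V E P (density_graph V E d P) x y} \<subseteq> nonnbh V E x \<inter> Y"
      using psi_iff True YV by (auto simp: nonnbh_def nbh_def)
    then have "card {y\<in>Y. psi V E P (density_graph V E d P) x y} \<le> card (nonnbh V E x \<inter> Y)"
      using finY by (intro card_mono) auto
    also have "\<dots> \<le> d" using True X unfolding dense_pair_def by blast
    finally show ?thesis .
  next
    case False
    then have sparse: "sparse_pair V E d X Y" using pairs X(1) assms(3) by blast
    have "{y\<in>Y. psi V E P (density_graph V E d P) x y} \<subseteq> nbh V E x \<inter> Y"
      using psi_iff False YV by (auto simp: nbh_def)
    then have "card {y\<in>Y. psi V E P (density_graph V E d P) x y} \<le> card (nbh V E x \<inter> Y)"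
      using finY by (intro card_mono) auto
    also have "\<dots> \<le> d" using sparse X unfolding sparse_pair_def by blast
    finally show ?thesis .
  qed
qed

abbreviation distant :: "nat \<Rightarrow> nat \<Rightarrow> bool" where
  "distant a b \<equiv> a + 1 < b \<or> b + 1 < a"

definition distant_targets :: "(nat \<Rightarrow> nat \<Rightarrow> bool) \<Rightarrow> nat set" where
  "distant_targets R = {v. \<exists>a. distant a v \<and> R a v}"

lemma rtranclp_interval_from_distant_target:
  fixes R :: "nat \<Rightarrow> nat \<Rightarrow> bool"
  assumes "R\<^sup>*\<^sup>* x y" "\<And>a. \<not> R a a"
  shows "\<exists>z \<in> insert x (distant_targets R). {min z y..max z y} \<subseteq> {v. R\<^sup>*\<^sup>* x v}"
  using assms(1)
proof (induction rule: rtranclp_induct)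
  case base
  then show ?case by auto
next
  case (step y y')
  then have reach: "R\<^sup>*\<^sup>* x y'" by simp
  show ?case
  proof (cases "distant y y'")
    case True
    then have "y' \<in> distant_targets R" using step(2) by (auto simp: distant_targets_def)
    then show ?thesis using reach by force
  next
    case False
    from step.IH obtain z where z: "z \<in> insert x (distant_targets R)"
      "{min z y..max z y} \<subseteq> {v. R\<^sup>*\<^sup>* x v}" by blast
    have "y \<noteq> y'" using step(2) assms(2) by blast
    with False have "{min z y'..max z y'} \<subseteq> insert y' {min z y..max z y}" by auto
    then show ?thesis using z reach by blast
  qed
qed

lemma card_interval_reach_le:
  assumes "finite C" "\<not> (\<exists>a. {a..<a + m} \<subseteq> C)"
  shows "card {y. {min z y..max z y} \<subseteq> C} \<le> m - 1"
proof (cases "{y. {min z y..max z y} \<subseteq> C} = {}")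
  case False
  define S where "S = {y. {min z y..max z y} \<subseteq> C}"
  have finS: "finite S" using assms(1) by (rule rev_finite_subset) (auto simp: S_def)
  have lo: "{min z (Min S)..max z (Min S)} \<subseteq> C" and hi: "{min z (Max S)..max z (Max S)} \<subseteq> C"
    using Min_in[OF finS] Max_in[OF finS] False by (simp_all add: S_def)
  have "{Min S..Max S} \<subseteq> C"
  proof
    fix t assume "t \<in> {Min S..Max S}"
    then show "t \<in> C" using lo hi by (cases "t \<le> z") auto
  qed
  then have "card {Min S..Max S} \<le> m - 1"
  proof (rule contrapos_pp)
    assume "\<not> card {Min S..Max S} \<le> m - 1"
    then have "{Min S..<Min S + m} \<subseteq> {Min S..Max S}" by auto
    then show "\<not> {Min S..Max S} \<subseteq> C" using assms(2) by blast
  qed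
  moreover have "card S \<le> card {Min S..Max S}"
    using finS by (intro card_mono) auto
  ultimately show ?thesis by (simp add: S_def)
qed simp

lemma card_rtranclp_le:
  fixes R :: "nat \<Rightarrow> nat \<Rightarrow> bool"
  assumes "finite {v. R\<^sup>*\<^sup>* x v}" "finite (distant_targets R)" "\<And>a. \<not> R a a"
    and "\<not> (\<exists>a. {a..<a + m} \<subseteq> {v. R\<^sup>*\<^sup>* x v})"
  shows "card {v. R\<^sup>*\<^sup>* x v} \<le> (card (distant_targets R) + 1) * (m - 1)"
proof -
  let ?C = "{v. R\<^sup>*\<^sup>* x v}" and ?Z = "insert x (distant_targets R)"
  let ?reach = "\<lambda>z. {y. {min z y..max z y} \<subseteq> ?C}"
  have cover: "?C = (\<Union>z\<in>?Z. ?reach z)"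
  proof
    show "?C \<subseteq> (\<Union>z\<in>?Z. ?reach z)"
    proof
      fix y assume "y \<in> ?C"
      then obtain z where "z \<in> ?Z" "{min z y..max z y} \<subseteq> ?C"
        using rtranclp_interval_from_distant_target[of R x y] assms(3) by auto
      then show "y \<in> (\<Union>z\<in>?Z. ?reach z)" by blast
    qed
    have "y \<in> {min z y..max z y}" for z y :: nat by simp
    then show "(\<Union>z\<in>?Z. ?reach z) \<subseteq> ?C" by blast
  qed
  have "card (\<Union>z\<in>?Z. ?reach z) \<le> (\<Sum>z\<in>?Z. card (?reach z))"
    using assms(2) by (intro card_UN_le) simp
  then have "card ?C \<le> (\<Sum>z\<in>?Z. card (?reach z))"
    by (simp only: cover[symmetric])
  also have "\<dots> \<le> (\<Sum>z\<in>?Z. m - 1)"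
    using card_interval_reach_le[OF assms(1,4)] by (intro sum_mono)
  also have "\<dots> = card ?Z * (m - 1)" by simp
  also have "\<dots> \<le> (card (distant_targets R) + 1) * (m - 1)"
    using assms(2) by (intro mult_le_mono1) (simp add: card_insert_if)
  finally show ?thesis .
qed

lemma card_distant_targets_Int_le:
  fixes R :: "nat \<Rightarrow> nat \<Rightarrow> bool"
  assumes "finite Y" "\<And>a. card {v\<in>Y. R a v} \<le> d"
    and "\<And>a v v'. v \<in> Y \<Longrightarrow> v' \<in> Y \<Longrightarrow> distant a v \<Longrightarrow> distant a v' \<Longrightarrow> R a v \<Longrightarrow> R a v'"
  shows "card (distant_targets R \<inter> Y) \<le> d + 3"
proof (cases "distant_targets R \<inter> Y = {}")
  case False
  then obtain a v0 where v0: "v0 \<in> Y" "distant a v0" "R a v0"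
    by (auto simp: distant_targets_def)
  have "distant_targets R \<inter> Y \<subseteq> {v\<in>Y. R a v} \<union> {a - 1, a, a + 1}"
  proof
    fix v assume v: "v \<in> distant_targets R \<inter> Y"
    show "v \<in> {v\<in>Y. R a v} \<union> {a - 1, a, a + 1}"
    proof (cases "distant a v")
      case True
      then show ?thesis using assms(3)[OF v0(1) _ v0(2) _ v0(3)] v by blast
    next
      case False
      then show ?thesis by auto
    qed
  qed
  then have "card (distant_targets R \<inter> Y) \<le> card ({v\<in>Y. R a v} \<union> {a - 1, a, a + 1})"
    using assms(1) by (intro card_mono) auto
  also have "\<dots> \<le> card {v\<in>Y. R a v} + card {a - 1, a, a + 1}"
    by (rule card_Un_le)
  also have "\<dots> \<le> d + 3"
    using assms(2)[of a] by (simp add: card_insert_if)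
  finally show ?thesis .
qed simp

lemma psi_density_graph_wH_edge_distant_cong:
  assumes "partition_on U P" "Y \<in> P" "v \<in> Y" "v' \<in> Y" "w ! (v - 1) = w ! (v' - 1)"
    and "distant a v" "distant a v'"
  shows "psi U (wH_edge w HE) P (density_graph U (wH_edge w HE) d P) a v
     \<longleftrightarrow> psi U (wH_edge w HE) P (density_graph U (wH_edge w HE) d P) a v'"
proof (cases "a \<in> U")
  case True
  then obtain X where X: "X \<in> P" "a \<in> X" using partition_onD1[OF assms(1)] by blast
  have "wH_edge w HE a v = wH_edge w HE a v'"
    using assms(5-7) by (auto simp: wH_edge_def)
  then show ?thesis
    using psi_density_graph_iff[OF assms(1) X(1) assms(2) X(2) assms(3)]
      psi_density_graph_iff[OF assms(1) X(1) assms(2) X(2) assms(4)] assms(6,7) by auto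
qed (simp add: psi_def)

lemma card_distant_targets_psi_density_graph_le:
  assumes "finite A" "set w \<subseteq> A" "U \<subseteq> {1..length w}" "ld_partition U (wH_edge w HE) l d P"
  shows "card (distant_targets (psi U (wH_edge w HE) P (density_graph U (wH_edge w HE) d P)))
           \<le> l * card A * (d + 3)"
proof -
  let ?phi = "psi U (wH_edge w HE) P (density_graph U (wH_edge w HE) d P)"
  let ?T = "distant_targets ?phi"
  let ?class = "\<lambda>(X, b). {v\<in>X. w ! (v - 1) = b}"
  have part: "partition_on U P" and cardP: "card P \<le> l"
    using assms(4) by (auto simp: ld_partition_def)
  have finU: "finite U" using assms(3) finite_subset by blast
  have finP: "finite P" using finite_elements[OF finU part] .
  have TU: "?T \<subseteq> U" by (auto simp: distant_targets_def psi_def)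
  have cover: "?T \<subseteq> (\<Union>p\<in>P \<times> A. ?T \<inter> ?class p)"
  proof
    fix v assume v: "v \<in> ?T"
    then obtain X where X: "X \<in> P" "v \<in> X" using TU partition_onD1[OF part] by blast
    have "v - 1 < length w" using v TU assms(3) by force
    then have "w ! (v - 1) \<in> A" using assms(2) nth_mem by blast
    then show "v \<in> (\<Union>p\<in>P \<times> A. ?T \<inter> ?class p)" using v X by force
  qed
  have "card ?T \<le> card (\<Union>p\<in>P \<times> A. ?T \<inter> ?class p)"
    using cover finite_subset[OF TU finU] by (intro card_mono) auto
  also have "\<dots> \<le> (\<Sum>p\<in>P \<times> A. card (?T \<inter> ?class p))"
    using finP assms(1) by (intro card_UN_le) simp
  also have "\<dots> \<le> (\<Sum>p\<in>P \<times> A. d + 3)"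
  proof (intro sum_mono)
    fix p assume "p \<in> P \<times> A"
    then obtain X b where p: "p = (X, b)" "X \<in> P" by auto
    have XU: "X \<subseteq> U" using p(2) partition_onD1[OF part] by blast
    have finX: "finite (?class p)" using finite_subset[OF XU finU] p(1) by simp
    show "card (?T \<inter> ?class p) \<le> d + 3"
    proof (rule card_distant_targets_Int_le[OF finX])
      fix a
      have "card {v \<in> ?class p. ?phi a v} \<le> card {v \<in> X. ?phi a v}"
        using finite_subset[OF XU finU] p(1) by (intro card_mono) auto
      also have "\<dots> \<le> d" using card_psi_density_graph_le[OF finU assms(4) p(2)] .
      finally show "card {v \<in> ?class p. ?phi a v} \<le> d" .
    next
      fix a v v'
      assume that: "v \<in> ?class p" "v' \<in> ?class p" "distant a v" "distant a v'" "?phi a v"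
      then have same: "v \<in> X" "v' \<in> X" "w ! (v - 1) = w ! (v' - 1)" using p(1) by auto
      show "?phi a v'"
        using psi_density_graph_wH_edge_distant_cong[OF part p(2) same that(3,4)] that(5) by blast
    qed
  qed
  also have "\<dots> \<le> l * card A * (d + 3)"
    using cardP by (simp add: card_cartesian_product)
  finally show ?thesis .
qed

lemma sparsification_eq_psi:
  assumes "strong_ld_graph V E l d"
  obtains P where "ld_partition V E l d P"
    and "sparsification V E l d = psi V E P (density_graph V E d P)"
proof -
  let ?P = "SOME P. strong_ld_partition V E l d P"
  have "strong_ld_partition V E l d ?P"
    using assms unfolding strong_ld_graph_def by (rule someI_ex)
  then show thesis
    by (intro that[of ?P]) (simp_all add: strong_ld_partition_def sparsification_def Let_def)
qed

lemma mult_add_3_le_twice_max_sq: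
  fixes k d :: nat
  shows "k * (d + 3) \<le> 2 * (max d 2)^2 * k^2"
proof -
  define D where "D = max d 2"
  have D: "2 \<le> D" "d \<le> D" by (auto simp: D_def)
  have "k \<le> k * k" by (cases k) auto
  moreover have "d + 3 \<le> 2 * (D * D)" using D mult_right_mono[OF D(1), of D] by linarith
  ultimately have "k * (d + 3) \<le> (k * k) * (2 * (D * D))" by (rule mult_le_mono)
  then show ?thesis by (simp add: D_def power2_eq_square algebra_simps)
qed

theorem lemma3p9:
  fixes w :: "'a list" and A :: "'a set" and HE :: "'a \<Rightarrow> 'a \<Rightarrow> bool"
    and U :: "nat set" and l d m :: nat and C :: "nat set"
  assumes "finite A"
    and "set w \<subseteq> A"
    and "\<forall>a b. HE a b \<longrightarrow> a \<in> A \<and> b \<in> A"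
    and "\<forall>a b. HE a b \<longrightarrow> HE b a"
    and "U \<subseteq> {1..length w}"
    and "strong_ld_graph U (wH_edge w HE) l d"
    and "0 < m"
    and "is_component U (sparsification U (wH_edge w HE) l d) C"
    and "card C \<ge> (2 * (max d 2)^2 * l^2 * (card A)^2 + 1) * (m - 1) + 1"
  shows "\<exists>a. {a..<a + m} \<subseteq> C"
proof (rule ccontr)
  assume no_run: "\<not> (\<exists>a. {a..<a + m} \<subseteq> C)"
  obtain P where P: "ld_partition U (wH_edge w HE) l d P"
    and phi: "sparsification U (wH_edge w HE) l d = psi U (wH_edge w HE) P (density_graph U (wH_edge w HE) d P)"
    using sparsification_eq_psi[OF assms(6)] by blast
  let ?phi = "psi U (wH_edge w HE) P (density_graph U (wH_edge w HE) d P)"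
  have restrict: "(\<lambda>a b. a \<in> U \<and> b \<in> U \<and> ?phi a b) = ?phi" by (intro ext) (auto simp: psi_def)
  obtain x where x: "x \<in> U" and C: "C = {v. ?phi\<^sup>*\<^sup>* x v}"
    using assms(8) unfolding is_component_def phi restrict by blast
  have finU: "finite U" using assms(5) finite_subset by blast
  have "C \<subseteq> U"
  proof
    fix y assume "y \<in> C"
    then have "?phi\<^sup>*\<^sup>* x y" by (simp add: C)
    then show "y \<in> U" using x by (cases rule: rtranclp.cases) (auto simp: psi_def)
  qed
  moreover have "distant_targets ?phi \<subseteq> U" by (auto simp: distant_targets_def psi_def)
  ultimately have "card C \<le> (card (distant_targets ?phi) + 1) * (m - 1)"
    unfolding C using finU no_run
    by (intro card_rtranclp_le) (auto simp: psi_def finite_subset C)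
  also have "\<dots> \<le> (l * card A * (d + 3) + 1) * (m - 1)"
    using card_distant_targets_psi_density_graph_le[OF assms(1,2,5) P] by simp
  also have "\<dots> \<le> (2 * (max d 2)^2 * l^2 * (card A)^2 + 1) * (m - 1)"
    using mult_add_3_le_twice_max_sq[of "l * card A" d]
    by (intro mult_le_mono1) (simp add: power_mult_distrib algebra_simps)
  finally show False using assms(9) by linarith
qed

end
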